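(* Let $2\le j\le n$ and let $K_j\subset\wedge^j\mathbb{R}^n$ be a proper cone. Then $\widehat{T}(K_j)$, if it is not $\{0\}$, coincides with the union of all $j$-dimensional linear subspaces $L\subset\mathbb{R}^n$ for which the line $\mathcal{A}_j(L)$ is contained in $K_j\cup(-K_j)$. The set $T(K_j)$, if it is nonempty, coincides with the closure of the union of all $j$-dimensional linear subspaces $L\subset\mathbb{R}^n$ for which the nonzero elements of the line $\mathcal{A}_j(L)$ lie in $\operatorname{int}(K_j)\cup\operatorname{int}(-K_j)$.
   Context: A proper cone is a closed convex cone that is pointed and solid. $\wedge^j\mathbb{R}^n$ is the $j$th exterior power of $\mathbb{R}^n$. For a $j$-dimensional subspace $L\subset\mathbb{R}^n$, $\mathcal{A}_j(L)=\{t(x_1\wedge\cdots\wedge x_j):t\in\mathbb{R}\}$ for any basis $x_1,\ldots,x_j$ of $L$ (well defined). $\widehat{T}(K_j)$ is the set of all $x_1\in\mathbb{R}^n$ for which there exist $x_2,\ldots,x_j\in\mathbb{R}^n$ with $x_1\wedge\cdots\wedge x_j\in(K_j\cup(-K_j))\setminus\{0\}$, together with $0$. $T(K_j)$ is the closure of the set of all $x_1\in\mathbb{R}^n$ for which there exist $x_2,\ldots,x_j\in\mathbb{R}^n$ with $x_1\wedge\cdots\wedge x_j\in\operatorname{int}(K_j)\cup\operatorname{int}(-K_j)$. *)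

theory Defs
  imports "HOL-Analysis.Analysis" "HOL-Combinatorics.Permutations"
begin

text \<open>Concrete model of the j-th exterior power of R^n, where R^n = real^'n and the
  index type 'n is linearly ordered (n = CARD('n)).  An element of the exterior power
  is a vector indexed by subsets I of the index type whose coordinates vanish unless
  card I = j; the coordinate at I is the coefficient of the standard basis
  j-vector e_I (elements of I taken in increasing order).\<close>

definition ext_space :: "nat \<Rightarrow> (real ^ (('n::{finite,wellorder}) set)) set" where
  "ext_space j = {v. \<forall>I. card I \<noteq> j \<longrightarrow> v $ I = 0}"

definition nth_elem :: "'n::{finite,wellorder} set \<Rightarrow> nat \<Rightarrow> 'n" where
  "nth_elem I i = sorted_list_of_set I ! i"

text \<open>x 0 \<wedge> ... \<wedge> x (j-1): its I-coordinate is the minor det[x_k(i_l)] (Leibniz formula).\<close>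
definition wedge :: "nat \<Rightarrow> (nat \<Rightarrow> real ^ ('n::{finite,wellorder})) \<Rightarrow> real ^ ('n set)" where
  "wedge j x = (\<chi> I. if card I = j then
      (\<Sum>p | p permutes {..<j}. of_int (sign p) * (\<Prod>k<j. x k $ nth_elem I (p k)))
    else 0)"

definition ext_int :: "nat \<Rightarrow> (real ^ (('n::{finite,wellorder}) set)) set \<Rightarrow> (real ^ ('n set)) set" where
  "ext_int j K = (top_of_set (ext_space j)) interior_of K"

definition proper_cone :: "nat \<Rightarrow> (real ^ (('n::{finite,wellorder}) set)) set \<Rightarrow> bool" where
  "proper_cone j K \<longleftrightarrow> K \<subseteq> ext_space j \<and> closed K \<and> convex K \<and> cone K
     \<and> K \<inter> uminus ` K = {0} \<and> ext_int j K \<noteq> {}"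

definition is_basis_of :: "nat \<Rightarrow> (nat \<Rightarrow> real ^ ('n::{finite,wellorder})) \<Rightarrow> (real ^ ('n::{finite,wellorder})) set \<Rightarrow> bool" where
  "is_basis_of j x L \<longleftrightarrow> inj_on x {..<j} \<and> independent (x ` {..<j}) \<and> span (x ` {..<j}) = L"

text \<open>The line A_j(L) = { t (x_1 \<wedge> ... \<wedge> x_j) : t real } (independent of the basis).\<close>
definition Aline :: "nat \<Rightarrow> (real ^ ('n::{finite,wellorder})) set \<Rightarrow> (real ^ ('n set)) set" where
  "Aline j L = {t *\<^sub>R wedge j x | t x. is_basis_of j x L}"

definition That :: "nat \<Rightarrow> (real ^ (('n::{finite,wellorder}) set)) set \<Rightarrow> (real ^ ('n::{finite,wellorder})) set" where
  "That j K = {y. \<exists>x. x 0 = y \<and> wedge j x \<in> (K \<union> uminus ` K) - {0}} \<union> {0}"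

definition Tset :: "nat \<Rightarrow> (real ^ (('n::{finite,wellorder}) set)) set \<Rightarrow> (real ^ ('n::{finite,wellorder})) set" where
  "Tset j K = closure {y. \<exists>x. x 0 = y \<and> wedge j x \<in> ext_int j K \<union> ext_int j (uminus ` K)}"

end

theory Submission
  imports Defs Jordan_Normal_Form.Determinant
begin

text \<open>The j-vector x 0 \<wedge> ... \<wedge> x (j-1) is nonzero exactly when the x k are a basis of the
  j-dimensional subspace L they span, and then A_j(L) is the line through it, since a change of
  basis multiplies the wedge by its determinant. So for any set C closed under nonzero scalings,
  the first factors of nonzero decomposable j-vectors in C are exactly the nonzero points of the
  subspaces L with A_j(L) - {0} \<subseteq> C: each such point starts a basis of L. Taking C = K \<union> -K
  gives T-hat, where 0 \<in> K makes the condition on A_j(L) - {0} the same as on A_j(L);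
  taking C = int K \<union> int(-K), which misses 0 as K is pointed, gives the set whose closure is
  T, and removing 0 does not change the closure since 0 is a limit point of every nonzero
  subspace.\<close>

definition minor_mat :: "nat \<Rightarrow> (nat \<Rightarrow> real ^ ('n::{finite,wellorder})) \<Rightarrow> 'n set \<Rightarrow> real mat" where
  "minor_mat j x I = Matrix.mat j j (\<lambda>(k, i). x k $ nth_elem I i)"

lemma minor_mat_carrier [simp]: "minor_mat j x I \<in> carrier_mat j j"
  by (simp add: minor_mat_def)

lemma wedge_nth_eq_det:
  assumes "card I = j"
  shows "wedge j x $ I = Determinant.det (minor_mat j x I)"
proof -
  have "(\<Prod>k = 0..<j. x k $ nth_elem I (p k)) = (\<Prod>i = 0..<j. minor_mat j x I $$ (i, p i))"
    if "p permutes {0..<j}" for p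
    using that by (auto simp: minor_mat_def permutes_in_image intro!: prod.cong)
  then show ?thesis
    using assms unfolding wedge_def Determinant.det_def lessThan_atLeast0
    by (auto simp: minor_mat_def intro!: sum.cong)
qed

lemma wedge_nth_eq_0: "card I \<noteq> j \<Longrightarrow> wedge j x $ I = 0"
  by (simp add: wedge_def)

lemma minor_mat_lincomb:
  assumes "\<And>k. k < j \<Longrightarrow> y k = (\<Sum>m<j. A k m *\<^sub>R x m)"
  shows "minor_mat j y I = Matrix.mat j j (\<lambda>(k, m). A k m) * minor_mat j x I"
  using assms by (intro eq_matI) (auto simp: minor_mat_def scalar_prod_def lessThan_atLeast0 sum_component)

lemma wedge_lincomb:
  assumes "\<And>k. k < j \<Longrightarrow> y k = (\<Sum>m<j. A k m *\<^sub>R x m)"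
  shows "wedge j y = Determinant.det (Matrix.mat j j (\<lambda>(k, m). A k m)) *\<^sub>R wedge j x"
proof -
  have "wedge j y $ I = (Determinant.det (Matrix.mat j j (\<lambda>(k, m). A k m)) *\<^sub>R wedge j x) $ I" for I
    by (cases "card I = j")
      (simp_all add: wedge_nth_eq_det wedge_nth_eq_0 minor_mat_lincomb[OF assms] det_mult[of _ j])
  then show ?thesis
    by (simp add: Finite_Cartesian_Product.vec_eq_iff)
qed

lemma wedge_eq_0_if_lincomb_eq_0:
  assumes "k0 < j" "c k0 \<noteq> 0" "(\<Sum>k<j. c k *\<^sub>R x k) = 0"
  shows "wedge j x = 0"
proof -
  have "wedge j x $ I = 0" if I: "card I = j" for I
  proof -
    let ?M = "minor_mat j x I"
    have "transpose_mat ?M *\<^sub>v Matrix.vec j c = 0\<^sub>v j"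
    proof (rule eq_vecI)
      fix i assume "i < dim_vec (0\<^sub>v j :: real Matrix.vec)"
      then have i: "i < j"
        by simp
      have "vec_index (transpose_mat ?M *\<^sub>v Matrix.vec j c) i = (\<Sum>k<j. c k * x k $ nth_elem I i)"
        using i by (simp add: minor_mat_def scalar_prod_def lessThan_atLeast0 mult.commute)
      also have "\<dots> = (\<Sum>k<j. c k *\<^sub>R x k) $ nth_elem I i"
        by (simp add: sum_component)
      finally show "vec_index (transpose_mat ?M *\<^sub>v Matrix.vec j c) i = vec_index (0\<^sub>v j) i"
        using assms(3) i by simp
    qed (simp add: minor_mat_def)
    moreover have "Matrix.vec j c \<noteq> 0\<^sub>v j"
      using assms(1,2) by (metis index_vec index_zero_vec(1))
    ultimately have "Determinant.det (transpose_mat ?M) = 0"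
      using det_0_iff_vec_prod_zero[of "transpose_mat ?M" j] by (metis carrier_vec_dim_vec dim_vec minor_mat_carrier transpose_carrier_mat)
    then show ?thesis
      using I by (simp add: wedge_nth_eq_det det_transpose[of _ j])
  qed
  then show ?thesis
    by (simp add: Finite_Cartesian_Product.vec_eq_iff) (metis wedge_nth_eq_0)
qed

lemma lincomb_eq_0_if_not_independent_family:
  fixes x :: "nat \<Rightarrow> 'a::real_vector"
  assumes "\<not> (inj_on x {..<j} \<and> independent (x ` {..<j}))"
  obtains c k0 where "k0 < j" "c k0 \<noteq> 0" "(\<Sum>k<j. c k *\<^sub>R x k) = 0"
proof (cases "inj_on x {..<j}")
  case False
  then obtain a b where ab: "a < j" "b < j" "a \<noteq> b" "x a = x b"
    unfolding inj_on_def by auto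
  define c where "c k = (if k = a then 1 else 0) - (if k = b then 1 else 0 :: real)" for k
  have "(\<Sum>k<j. c k *\<^sub>R x k) = (\<Sum>k<j. if k = a then x k else 0) - (\<Sum>k<j. if k = b then x k else 0)"
    unfolding sum_subtractf[symmetric] c_def by (intro sum.cong) (auto simp: scaleR_diff_left)
  also have "\<dots> = 0"
    using ab by simp
  finally show ?thesis
    using that[of a c] ab by (simp add: c_def)
next
  case True
  then have "dependent (x ` {..<j})"
    using assms by simp
  then obtain u where u: "\<exists>v\<in>x ` {..<j}. u v \<noteq> 0" "(\<Sum>v\<in>x ` {..<j}. u v *\<^sub>R v) = 0"
    using dependent_finite[of "x ` {..<j}"] by auto
  then obtain k0 where "k0 < j" "u (x k0) \<noteq> 0"
    by auto
  moreover have "(\<Sum>k<j. u (x k) *\<^sub>R x k) = 0"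
    using u(2) by (simp add: sum.reindex[OF True])
  ultimately show ?thesis
    using that[of k0 "u \<circ> x"] by simp
qed

lemma wedge_eq_0_if_not_independent_family:
  "\<not> (inj_on x {..<j} \<and> independent (x ` {..<j})) \<Longrightarrow> wedge j x = 0"
  by (erule lincomb_eq_0_if_not_independent_family) (rule wedge_eq_0_if_lincomb_eq_0)

lemma independent_family_lincomb_eq_0:
  fixes x :: "nat \<Rightarrow> 'a::real_vector"
  assumes "inj_on x {..<j}" "independent (x ` {..<j})"
    and "(\<Sum>k<j. c k *\<^sub>R x k) = 0" "k < j"
  shows "c k = 0"
proof -
  define u where "u w = c (inv_into {..<j} x w)" for w
  have "(\<Sum>w\<in>x ` {..<j}. u w *\<^sub>R w) = (\<Sum>k<j. u (x k) *\<^sub>R x k)"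
    using sum.reindex[OF assms(1)] by (simp add: comp_def)
  also have "\<dots> = (\<Sum>k<j. c k *\<^sub>R x k)"
    using assms(1) by (intro sum.cong) (auto simp: u_def)
  finally have "u (x k) = 0"
    using assms(2,3,4) by (intro independentD[of "x ` {..<j}"]) auto
  then show ?thesis
    using assms(1,4) by (simp add: u_def)
qed

lemma independent_span_Int_span_Diff:
  fixes B :: "'a::euclidean_space set"
  assumes "independent B" "S \<subseteq> B" "v \<in> span S" "v \<in> span (B - S)"
  shows "v = 0"
proof -
  have "finite B"
    using assms(1) by (simp add: finiteI_independent)
  then have fS: "finite S" and fD: "finite (B - S)"
    using assms(2) finite_subset by auto
  obtain a where a: "v = (\<Sum>w\<in>S. a w *\<^sub>R w)"
    using assms(3) span_finite[OF fS] by auto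
  obtain b where b: "v = (\<Sum>w\<in>B - S. b w *\<^sub>R w)"
    using assms(4) span_finite[OF fD] by auto
  define c where "c w = (if w \<in> S then a w else - b w)" for w
  have "(\<Sum>w\<in>B. c w *\<^sub>R w) = (\<Sum>w\<in>S. c w *\<^sub>R w) + (\<Sum>w\<in>B - S. c w *\<^sub>R w)"
    using assms(2) fS fD by (subst sum.union_disjoint[symmetric]) (auto simp: Un_absorb1)
  also have "(\<Sum>w\<in>S. c w *\<^sub>R w) = v"
    unfolding a c_def by simp
  also have "(\<Sum>w\<in>B - S. c w *\<^sub>R w) = - v"
    unfolding b c_def by (simp add: sum_negf)
  finally have "(\<Sum>w\<in>B. c w *\<^sub>R w) = 0"
    by simp
  then have "\<forall>w\<in>B. c w = 0"
    using assms(1) independent_explicit by blast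
  then have "\<forall>w\<in>B - S. b w = 0"
    unfolding c_def by auto
  then show ?thesis
    unfolding b c_def by simp
qed

text \<open>The coordinates outside I are those of standard basis vectors completing S to a basis,
  so a vector of span S vanishing on I lies in the span of the complement.\<close>

lemma independent_obtains_coordinate_set:
  fixes S :: "(real ^ 'n) set"
  assumes "independent S"
  obtains I where "card I = card S" "\<And>v. v \<in> span S \<Longrightarrow> (\<forall>i\<in>I. v $ i = 0) \<Longrightarrow> v = 0"
proof -
  obtain B where B: "S \<subseteq> B" "B \<subseteq> S \<union> Basis" "independent B" "S \<union> Basis \<subseteq> span B"
    using maximal_independent_subset_extend[of S "S \<union> Basis"] assms by auto
  have "span (Basis :: (real ^ 'n) set) \<subseteq> span B"
    using B(4) by (intro span_minimal) (auto simp: subspace_span)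
  then have "span B = UNIV"
    by (simp add: span_Basis top_le)
  then have cB: "card B = CARD('n)"
    using dim_eq_card_independent[OF B(3)] dim_span[of B] by simp
  have fB: "finite B"
    using B(3) by (simp add: finiteI_independent)
  define J where "J = {i. axis i (1::real) \<in> B - S}"
  have BS: "B - S = (\<lambda>i. axis i (1::real)) ` J"
    using B(2) unfolding J_def by (auto simp: Basis_vec_def)
  have "inj_on (\<lambda>i. axis i (1::real)) J"
    by (auto simp: inj_on_def axis_eq_axis)
  then have "card J = card (B - S)"
    using BS card_image by metis
  also have "\<dots> = card B - card S"
    using card_Diff_subset[OF finite_subset[OF B(1) fB] B(1)] .
  moreover have "card (- J) = CARD('n) - card J"
    unfolding Compl_eq_Diff_UNIV by (rule card_Diff_subset) auto
  ultimately have cI: "card (- J) = card S"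
    using card_mono[OF fB B(1)] cB by linarith
  show ?thesis
  proof (rule that[OF cI])
    fix v :: "real ^ 'n" assume v: "v \<in> span S" "\<forall>i\<in>- J. v $ i = 0"
    have "v $ k = (\<Sum>i\<in>J. v $ i *\<^sub>R axis i (1::real)) $ k" for k
    proof -
      have "(\<Sum>i\<in>J. v $ i *\<^sub>R axis i (1::real)) $ k = (if k \<in> J then v $ k else 0)"
        by (simp add: sum_component axis_def if_distrib[of "\<lambda>z. vec_nth v _ * z"] sum.delta cong: if_cong)
      then show ?thesis
        using v(2) by auto
    qed
    then have "v = (\<Sum>i\<in>J. v $ i *\<^sub>R axis i 1)"
      unfolding Finite_Cartesian_Product.vec_eq_iff by blast
    also have "\<dots> \<in> span (B - S)"
      by (intro span_sum span_scale span_base) (auto simp: J_def)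
    finally show "v = 0"
      using independent_span_Int_span_Diff[OF B(3) B(1) v(1)] by simp
  qed
qed

lemma nth_elem_surj:
  assumes "i \<in> I"
  obtains m where "m < card I" "nth_elem I m = i"
proof -
  have "i \<in> set (sorted_list_of_set I)"
    using assms by simp
  then show ?thesis
    using that by (metis in_set_conv_nth length_sorted_list_of_set nth_elem_def)
qed

lemma wedge_neq_0_if_independent_family:
  assumes inj: "inj_on x {..<j}" and ind: "independent (x ` {..<j})"
  shows "wedge j x \<noteq> 0"
proof
  assume "wedge j x = 0"
  obtain I where cI: "card I = j"
    and vanish: "\<And>v. v \<in> span (x ` {..<j}) \<Longrightarrow> (\<forall>i\<in>I. v $ i = 0) \<Longrightarrow> v = 0"
    using independent_obtains_coordinate_set[OF ind] card_image[OF inj] by (metis card_lessThan)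
  let ?M = "minor_mat j x I"
  have "Determinant.det (transpose_mat ?M) = 0"
    using \<open>wedge j x = 0\<close> wedge_nth_eq_det[OF cI, of x] by (simp add: det_transpose[of _ j])
  then obtain c where c: "c \<in> carrier_vec j" "c \<noteq> 0\<^sub>v j" "transpose_mat ?M *\<^sub>v c = 0\<^sub>v j"
    using det_0_iff_vec_prod_zero[of "transpose_mat ?M" j] by auto
  define v where "v = (\<Sum>k<j. vec_index c k *\<^sub>R x k)"
  have "v $ i = 0" if "i \<in> I" for i
  proof -
    obtain m where m: "m < j" "nth_elem I m = i"
      using nth_elem_surj[OF \<open>i \<in> I\<close>] cI by metis
    have "v $ i = vec_index (transpose_mat ?M *\<^sub>v c) m"
      using m c(1) by (auto simp: v_def sum_component minor_mat_def scalar_prod_def lessThan_atLeast0 mult.commute)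
    then show ?thesis
      using c(3) m(1) by simp
  qed
  moreover have "v \<in> span (x ` {..<j})"
    unfolding v_def by (intro span_sum span_scale span_base) auto
  ultimately have "v = 0"
    using vanish by blast
  then have "\<forall>k<j. vec_index c k = 0"
    using independent_family_lincomb_eq_0[OF inj ind] by (auto simp: v_def)
  then show False
    using c(1,2) by (auto intro!: eq_vecI)
qed

lemma wedge_eq_0_iff: "wedge j x = 0 \<longleftrightarrow> \<not> (inj_on x {..<j} \<and> independent (x ` {..<j}))"
  using wedge_eq_0_if_not_independent_family wedge_neq_0_if_independent_family by auto

lemma span_image_obtains_lincomb:
  fixes x :: "nat \<Rightarrow> 'a::real_vector"
  assumes "inj_on x {..<j}" "y \<in> span (x ` {..<j})"
  obtains a where "y = (\<Sum>m<j. a m *\<^sub>R x m)"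
proof -
  obtain u where "y = (\<Sum>w\<in>x ` {..<j}. u w *\<^sub>R w)"
    using assms(2) span_finite[of "x ` {..<j}"] by auto
  also have "\<dots> = (\<Sum>m<j. u (x m) *\<^sub>R x m)"
    using sum.reindex[OF assms(1)] by (simp add: comp_def)
  finally show ?thesis
    by (rule that)
qed

lemma is_basis_of_span:
  assumes "inj_on x {..<j}" "independent (x ` {..<j})"
  shows "is_basis_of j x (span (x ` {..<j}))" "dim (span (x ` {..<j})) = j"
  using assms dim_eq_card_independent[OF assms(2)] card_image[OF assms(1)]
  by (simp_all add: is_basis_of_def dim_span)

lemma Aline_eq:
  assumes "is_basis_of j x L"
  shows "Aline j L = range (\<lambda>t. t *\<^sub>R wedge j x)"
proof
  show "range (\<lambda>t. t *\<^sub>R wedge j x) \<subseteq> Aline j L"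
    using assms unfolding Aline_def by blast
next
  show "Aline j L \<subseteq> range (\<lambda>t. t *\<^sub>R wedge j x)"
  proof
    fix z assume "z \<in> Aline j L"
    then obtain t y where z: "z = t *\<^sub>R wedge j y" and y: "is_basis_of j y L"
      unfolding Aline_def by auto
    have "\<exists>a. y k = (\<Sum>m<j. a m *\<^sub>R x m)" if "k < j" for k
    proof -
      have "y k \<in> span (x ` {..<j})"
        using that y assms unfolding is_basis_of_def by (auto intro: span_base)
      then show ?thesis
        using assms span_image_obtains_lincomb unfolding is_basis_of_def by metis
    qed
    then obtain A where "\<And>k. k < j \<Longrightarrow> y k = (\<Sum>m<j. A k m *\<^sub>R x m)"
      by metis
    then have "z = (t * Determinant.det (Matrix.mat j j (\<lambda>(k, m). A k m))) *\<^sub>R wedge j x"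
      unfolding z by (subst wedge_lincomb) simp_all
    then show "z \<in> range (\<lambda>t. t *\<^sub>R wedge j x)"
      by blast
  qed
qed

lemma subspace_obtains_basis_starting_with:
  fixes L :: "(real ^ 'n::{finite,wellorder}) set"
  assumes "subspace L" "dim L = j" "y \<in> L" "y \<noteq> 0"
  obtains x where "x 0 = y" "is_basis_of j x L"
proof -
  obtain B where B: "{y} \<subseteq> B" "B \<subseteq> L" "independent B" "L \<subseteq> span B"
    using maximal_independent_subset_extend[of "{y}" L] assms(3,4) by auto
  have spB: "span B = L"
    using B(2,4) assms(1) span_minimal by blast
  have fB: "finite B"
    using B(3) by (simp add: finiteI_independent)
  have cB: "card B = j"
    using dim_eq_card_independent[OF B(3)] dim_span[of B] spB assms(2) by simp
  then obtain i where j: "j = Suc i"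
    using B(1) fB by (metis card_0_eq empty_iff insert_subset not0_implies_Suc)
  obtain f where f: "bij_betw f {..<i} (B - {y})"
    using ex_bij_betw_nat_finite[of "B - {y}"] fB B(1) cB j by (auto simp: atLeast0LessThan)
  define x where "x k = (if k = 0 then y else f (k - 1))" for k
  have "x ` {..<j} = insert y (f ` {..<i})"
    unfolding j lessThan_Suc_eq_insert_0 image_insert image_image by (simp add: x_def)
  also have "\<dots> = B"
    using f B(1) by (auto simp: bij_betw_def)
  finally have img: "x ` {..<j} = B" .
  then have "inj_on x {..<j}"
    using cB fB by (simp add: eq_card_imp_inj_on)
  with img B(3) spB have "is_basis_of j x L"
    by (simp add: is_basis_of_def)
  then show ?thesis
    by (rule that[rotated]) (simp add: x_def)
qed

lemma first_vectors_eq_Union_subspaces: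
  fixes C :: "(real ^ ('n::{finite,wellorder}) set) set"
  assumes "0 < j" and scale: "\<And>c w. c \<noteq> 0 \<Longrightarrow> w \<in> C \<Longrightarrow> c *\<^sub>R w \<in> C"
  shows "{y. \<exists>x. x 0 = y \<and> wedge j x \<in> C - {0}}
    = \<Union>{L. subspace L \<and> dim L = j \<and> Aline j L - {0} \<subseteq> C} - {0}"
proof
  show "{y. \<exists>x. x 0 = y \<and> wedge j x \<in> C - {0}}
    \<subseteq> \<Union>{L. subspace L \<and> dim L = j \<and> Aline j L - {0} \<subseteq> C} - {0}"
  proof
    fix y assume "y \<in> {y. \<exists>x. x 0 = y \<and> wedge j x \<in> C - {0}}"
    then obtain x where y: "y = x 0" and x: "wedge j x \<in> C" "wedge j x \<noteq> 0"
      by auto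
    then have inj: "inj_on x {..<j}" and ind: "independent (x ` {..<j})"
      using wedge_eq_0_iff by blast+
    let ?L = "span (x ` {..<j})"
    have "Aline j ?L - {0} \<subseteq> C"
      using Aline_eq[OF is_basis_of_span(1)[OF inj ind]] scale[OF _ x(1)] by force
    moreover have "x 0 \<in> x ` {..<j}"
      using assms(1) by simp
    ultimately show "y \<in> \<Union>{L. subspace L \<and> dim L = j \<and> Aline j L - {0} \<subseteq> C} - {0}"
      using y is_basis_of_span(2)[OF inj ind] dependent_zero[of "x ` {..<j}"] ind
      by (auto intro!: exI[of _ ?L] span_base)
  qed
next
  show "\<Union>{L. subspace L \<and> dim L = j \<and> Aline j L - {0} \<subseteq> C} - {0}
    \<subseteq> {y. \<exists>x. x 0 = y \<and> wedge j x \<in> C - {0}}"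
  proof
    fix y assume "y \<in> \<Union>{L. subspace L \<and> dim L = j \<and> Aline j L - {0} \<subseteq> C} - {0}"
    then obtain L where L: "subspace L" "dim L = j" "Aline j L - {0} \<subseteq> C" "y \<in> L" "y \<noteq> 0"
      by auto
    then obtain x where x: "x 0 = y" "is_basis_of j x L"
      by (metis subspace_obtains_basis_starting_with)
    then have "wedge j x \<noteq> 0"
      using wedge_eq_0_iff unfolding is_basis_of_def by blast
    moreover have "wedge j x \<in> Aline j L"
      using Aline_eq[OF x(2)] by (metis rangeI scaleR_one)
    ultimately show "y \<in> {y. \<exists>x. x 0 = y \<and> wedge j x \<in> C - {0}}"
      using x(1) L(3) by blast
  qed
qed

lemma closure_Union_subspaces_Diff_0:
  fixes G :: "'a::real_normed_vector set set"
  assumes "\<And>L. L \<in> G \<Longrightarrow> subspace L \<and> L \<noteq> {0}"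
  shows "closure (\<Union>G - {0}) = closure (\<Union>G)"
proof
  show "closure (\<Union>G - {0}) \<subseteq> closure (\<Union>G)"
    by (rule closure_mono) blast
next
  have "0 \<in> closure (\<Union>G - {0})" if "L \<in> G" for L
  proof -
    have "subspace L" "L \<noteq> {0}"
      using assms[OF that] by auto
    moreover have "L \<noteq> {x}" for x
      using \<open>subspace L\<close> \<open>L \<noteq> {0}\<close> subspace_0 by blast
    ultimately have "0 islimpt L"
      by (intro connected_imp_perfect convex_connected subspace_imp_convex subspace_0)
    then have "0 \<in> closure (L - {0})"
      by (simp add: islimpt_in_closure)
    also have "\<dots> \<subseteq> closure (\<Union>G - {0})"
      using that by (intro closure_mono) blast
    finally show ?thesis .
  qed
  moreover have "\<Union>G - {0} \<subseteq> closure (\<Union>G - {0})"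
    by (rule closure_subset)
  ultimately have "\<Union>G \<subseteq> closure (\<Union>G - {0})"
    by blast
  then show "closure (\<Union>G) \<subseteq> closure (\<Union>G - {0})"
    by (rule closure_minimal) simp
qed

lemma cone_scaleR_image_cases:
  fixes K :: "'a::real_vector set"
  assumes "cone K" "c \<noteq> 0"
  shows "(\<lambda>v. c *\<^sub>R v) ` K \<subseteq> K \<and> (\<lambda>v. c *\<^sub>R v) ` uminus ` K \<subseteq> uminus ` K
    \<or> (\<lambda>v. c *\<^sub>R v) ` K \<subseteq> uminus ` K \<and> (\<lambda>v. c *\<^sub>R v) ` uminus ` K \<subseteq> K"
proof -
  have pos: "(\<lambda>v. d *\<^sub>R v) ` K \<subseteq> K" if "d > 0" for d
    using assms(1) that unfolding cone_def by auto
  have swap: "(\<lambda>v. d *\<^sub>R v) ` uminus ` K = uminus ` (\<lambda>v. d *\<^sub>R v) ` K" for d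
    by (simp add: image_image)
  show ?thesis
  proof (cases "c > 0")
    case True
    then show ?thesis
      using pos[of c] swap[of c] by (simp add: image_mono)
  next
    case False
    then have "- c > 0"
      using assms(2) by simp
    moreover have "(\<lambda>v. c *\<^sub>R v) ` K = uminus ` (\<lambda>v. (- c) *\<^sub>R v) ` K"
      by (simp add: image_image)
    moreover have "(\<lambda>v. c *\<^sub>R v) ` uminus ` K = (\<lambda>v. (- c) *\<^sub>R v) ` K"
      by (simp add: image_image)
    ultimately show ?thesis
      using pos[of "- c"] by (simp add: image_mono)
  qed
qed

lemma ext_int_scaleR:
  assumes "c \<noteq> 0" "w \<in> ext_int j K"
  shows "c *\<^sub>R w \<in> ext_int j ((\<lambda>v. c *\<^sub>R v) ` K)"
proof -
  let ?E = "ext_space j :: (real ^ ('n::{finite,wellorder}) set) set"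
  have E: "subspace ?E"
    unfolding subspace_def ext_space_def by auto
  obtain U where U: "open U" "w \<in> ?E \<inter> U" "?E \<inter> U \<subseteq> K"
    using assms(2) unfolding ext_int_def interior_of_def openin_open by auto
  have "openin (top_of_set ?E) (?E \<inter> (\<lambda>v. c *\<^sub>R v) ` U)"
    using open_scaling[OF assms(1) U(1)] openin_open by blast
  moreover have "c *\<^sub>R w \<in> ?E \<inter> (\<lambda>v. c *\<^sub>R v) ` U"
    using U(2) subspace_scale[OF E] by auto
  moreover have "?E \<inter> (\<lambda>v. c *\<^sub>R v) ` U \<subseteq> (\<lambda>v. c *\<^sub>R v) ` K"
  proof clarify
    fix u assume u: "c *\<^sub>R u \<in> ?E" "u \<in> U"
    have "u = inverse c *\<^sub>R (c *\<^sub>R u)"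
      using assms(1) by simp
    then have "u \<in> ?E"
      using subspace_scale[OF E u(1)] by metis
    then show "c *\<^sub>R u \<in> (\<lambda>v. c *\<^sub>R v) ` K"
      using u(2) U(3) by blast
  qed
  ultimately show ?thesis
    unfolding ext_int_def interior_of_def by blast
qed

lemma cone_Un_uminus_scaleR:
  assumes "cone K" "c \<noteq> 0" "w \<in> K \<union> uminus ` K"
  shows "c *\<^sub>R w \<in> K \<union> uminus ` K"
proof -
  have "(\<lambda>v. c *\<^sub>R v) ` K \<union> (\<lambda>v. c *\<^sub>R v) ` uminus ` K \<subseteq> K \<union> uminus ` K"
    using cone_scaleR_image_cases[OF assms(1,2)] by blast
  then show ?thesis
    using assms(3) image_Un[of "\<lambda>v. c *\<^sub>R v" K "uminus ` K"] by blast
qed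

lemma ext_int_mono: "A \<subseteq> B \<Longrightarrow> ext_int j A \<subseteq> ext_int j B"
  unfolding ext_int_def by (rule interior_of_mono)

lemma ext_int_Un_uminus_scaleR:
  assumes "cone K" "c \<noteq> 0" "w \<in> ext_int j K \<union> ext_int j (uminus ` K)"
  shows "c *\<^sub>R w \<in> ext_int j K \<union> ext_int j (uminus ` K)"
proof -
  have "ext_int j ((\<lambda>v. c *\<^sub>R v) ` K) \<union> ext_int j ((\<lambda>v. c *\<^sub>R v) ` uminus ` K)
      \<subseteq> ext_int j K \<union> ext_int j (uminus ` K)"
    using cone_scaleR_image_cases[OF assms(1,2)]
  proof
    assume "(\<lambda>v. c *\<^sub>R v) ` K \<subseteq> K \<and> (\<lambda>v. c *\<^sub>R v) ` uminus ` K \<subseteq> uminus ` K"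
    then show ?thesis
      using ext_int_mono by (metis Un_mono)
  next
    assume "(\<lambda>v. c *\<^sub>R v) ` K \<subseteq> uminus ` K \<and> (\<lambda>v. c *\<^sub>R v) ` uminus ` K \<subseteq> K"
    then show ?thesis
      using ext_int_mono by (metis Un_commute Un_mono)
  qed
  moreover have "c *\<^sub>R w \<in> ext_int j ((\<lambda>v. c *\<^sub>R v) ` K) \<union> ext_int j ((\<lambda>v. c *\<^sub>R v) ` uminus ` K)"
    using assms(3) ext_int_scaleR[OF assms(2)] by blast
  ultimately show ?thesis
    by blast
qed

lemma zero_notin_ext_int:
  fixes K :: "(real ^ ('n::{finite,wellorder}) set) set"
  assumes "K \<inter> uminus ` K \<subseteq> {0}" "j \<le> CARD('n)"
  shows "0 \<notin> ext_int j K"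
proof
  assume "0 \<in> ext_int j K"
  then obtain U where U: "open U" "0 \<in> U" "ext_space j \<inter> U \<subseteq> K"
    unfolding ext_int_def interior_of_def openin_open by auto
  obtain e where e: "e > 0" "ball 0 e \<subseteq> U"
    using U(1,2) open_contains_ball by blast
  obtain I :: "'n set" where I: "card I = j"
    using obtain_subset_with_card_n[of j "UNIV :: 'n set"] assms(2) by auto
  define v :: "real ^ ('n set)" where "v = (\<chi> J. if J = I then e / 2 else 0)"
  have "v \<noteq> 0"
    using e(1) by (auto simp: v_def Finite_Cartesian_Product.vec_eq_iff)
  have "norm v = e / 2"
    using e(1) by (simp add: v_def norm_vec_def L2_set_def if_distrib[of "\<lambda>z. z\<^sup>2"] cong: if_cong)
  then have "v \<in> U" "- v \<in> U"
    using e by (auto simp: subset_iff)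
  moreover have "v \<in> ext_space j" "- v \<in> ext_space j"
    using I by (auto simp: v_def ext_space_def)
  ultimately have "v \<in> K" "- v \<in> K"
    using U(3) by auto
  then have "v \<in> K \<inter> uminus ` K"
    by (metis IntI image_eqI minus_minus)
  then show False
    using assms(1) \<open>v \<noteq> 0\<close> by blast
qed

lemma That_eq_Union_subspaces:
  assumes "0 < j" "cone K" "0 \<in> K" "That j K \<noteq> {0}"
  shows "That j K = \<Union>{L. subspace L \<and> dim L = j \<and> Aline j L \<subseteq> K \<union> uminus ` K}"
    (is "_ = ?U")
proof -
  have "That j K = insert 0 (?U - {0})"
    using first_vectors_eq_Union_subspaces[OF assms(1) cone_Un_uminus_scaleR[OF assms(2)]] assms(3)
    unfolding That_def by (simp add: Diff_subset_conv insert_absorb)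
  moreover have "insert 0 (?U - {0}) = ?U" if "?U - {0} \<noteq> {}"
    using that subspace_0 by blast
  ultimately show ?thesis
    using assms(4) by auto
qed

lemma Tset_eq_closure_Union_subspaces:
  assumes "0 < j" "cone K" "0 \<notin> ext_int j K \<union> ext_int j (uminus ` K)"
  shows "Tset j K = closure (\<Union>{L. subspace L \<and> dim L = j \<and>
    Aline j L - {0} \<subseteq> ext_int j K \<union> ext_int j (uminus ` K)})"
    (is "_ = closure ?U")
proof -
  let ?D = "ext_int j K \<union> ext_int j (uminus ` K)"
  have "?D - {0} = ?D"
    using assms(3) by blast
  have "{y. \<exists>x. x 0 = y \<and> wedge j x \<in> ?D} = ?U - {0}"
    using first_vectors_eq_Union_subspaces[OF assms(1) ext_int_Un_uminus_scaleR[OF assms(2), where j = j]]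
    unfolding \<open>?D - {0} = ?D\<close> .
  then have "Tset j K = closure (?U - {0})"
    unfolding Tset_def by simp
  also have "\<dots> = closure ?U"
    using assms(1) by (intro closure_Union_subspaces_Diff_0) auto
  finally show ?thesis .
qed

theorem lemma3:
  fixes K :: "(real ^ (('n::{finite,wellorder}) set)) set" and j :: nat
  assumes "2 \<le> j" and "j \<le> CARD('n)" and "proper_cone j K"
  shows "(That j K \<noteq> {0} \<longrightarrow>
            That j K = \<Union>{L. subspace L \<and> dim L = j \<and> Aline j L \<subseteq> K \<union> uminus ` K})
       \<and> (Tset j K \<noteq> {} \<longrightarrow>
            Tset j K = closure (\<Union>{L. subspace L \<and> dim L = j \<and>
               Aline j L - {0} \<subseteq> ext_int j K \<union> ext_int j (uminus ` K)}))"
proof -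
  have cone: "cone K" and pointed: "K \<inter> uminus ` K = {0}" and "ext_int j K \<noteq> {}"
    using assms(3) unfolding proper_cone_def by auto
  then have "K \<noteq> {}"
    using interior_of_subset unfolding ext_int_def by blast
  with cone have "0 \<in> K"
    by (simp add: cone_contains_0)
  have "uminus ` K \<inter> uminus ` uminus ` K = K \<inter> uminus ` K"
    by (simp add: image_image Int_commute)
  then have zero: "0 \<notin> ext_int j K \<union> ext_int j (uminus ` K)"
    using zero_notin_ext_int[OF _ assms(2)] pointed by (metis Un_iff order_refl)
  have "0 < j"
    using assms(1) by simp
  show ?thesis
    using That_eq_Union_subspaces[OF \<open>0 < j\<close> cone \<open>0 \<in> K\<close>]
      Tset_eq_closure_Union_subspaces[OF \<open>0 < j\<close> cone zero] by blast
qed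

end
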